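(* Let $(\Omega,\mathcal R,\mathcal K)$ be a bidirectional kinetic system. Then $(\Omega,\mathcal R,\mathcal K)$ admits a closed completion $(\Omega_c,\mathcal R_c,\mathcal K_c)$ such that $\pi_\Omega R\neq0$ for every $R\in\mathcal R_c$, and every $R\in\mathcal R$ is the image $\pi_\Omega\bar R$ of exactly one $\bar R\in\mathcal R_c$.
   Context: A chemical network is $(\Omega,\mathcal R)$ with $\Omega=\{1,\dots,N\}$ and $\mathcal R$ a finite set of nonzero integer vectors indexed by $\Omega$. $I(R)=\{i:R(i)<0\}$, $F(R)=\{i:R(i)>0\}$. Bidirectional: $R\in\mathcal R\Rightarrow-R\in\mathcal R$; $\mathcal R_s$ contains exactly one of each pair $\{R,-R\}$. Conservation laws $\mathcal M=(\mathrm{span}\,\mathcal R)^\perp$; conservative means $\mathcal M\cap(0,\infty)^\Omega\ne\emptyset$. A kinetic system $(\Omega,\mathcal R,\mathcal K)$ has rates $\mathcal K:\mathcal R\to(0,\infty)$, $K_R=\mathcal K(R)$; it satisfies detailed balance if there is $\bar N\in(0,\infty)^\Omega$ with $K_R\prod_{i\in I(R)}\bar N_i^{-R(i)}=K_{-R}\prod_{i\in F(R)}\bar N_i^{R(i)}$ for all $R\in\mathcal R_s$. It is closed if it satisfies detailed balance, is conservative, and $I(R)\ne\emptyset$, $F(R)\ne\emptyset$ for all $R\in\mathcal R$. For $A\subset\Omega_c$, $\pi_Av=(v(i))_{i\in A}$. Given a kinetic system $(\Omega_c,\mathcal R_c,\mathcal K_c)$ with $\Omega\subset\Omega_c$ and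 positive $n=(n_i)_{i\in\Omega_c\setminus\Omega}$, the reduced rates are $\mathcal K_c[n](R)=\sum_{\bar R\in\mathcal R_c:\pi_\Omega\bar R=R}\mathcal K_c(\bar R)\prod_{s\in(\Omega_c\setminus\Omega)\cap I(\bar R)}n_s^{-\bar R(s)}$ for $R\in\{\pi_\Omega\bar R\}\setminus\{0\}$. A completion of $(\Omega,\mathcal R,\mathcal K)$ is a kinetic system $(\Omega_c,\mathcal R_c,\mathcal K_c)$ with $\Omega\subset\Omega_c$, $\mathcal R=\{\pi_\Omega R:R\in\mathcal R_c\}$, and such that there exist concentrations $n_{\Omega_c\setminus\Omega}=(n_i)_{i\in\Omega_c\setminus\Omega}$ with $\mathcal K=\mathcal K_c[n_{\Omega_c\setminus\Omega}]$. *)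

theory Defs
  imports Complex_Main
begin

text \<open>Species are natural numbers; the species set of a network with N species is {1..N}.
  A vector indexed by Omega is a function nat => int vanishing outside Omega.\<close>

definition species :: "nat \<Rightarrow> nat set" where
  "species N = {1..N}"

definition vec_on :: "nat set \<Rightarrow> (nat \<Rightarrow> int) \<Rightarrow> bool" where
  "vec_on A v \<longleftrightarrow> (\<forall>i. i \<notin> A \<longrightarrow> v i = 0)"

definition proj :: "nat set \<Rightarrow> (nat \<Rightarrow> int) \<Rightarrow> (nat \<Rightarrow> int)" where
  "proj A v = (\<lambda>i. if i \<in> A then v i else 0)"

definition Iset :: "nat set \<Rightarrow> (nat \<Rightarrow> int) \<Rightarrow> nat set" where
  "Iset A R = {i \<in> A. R i < 0}"

definition Fset :: "nat set \<Rightarrow> (nat \<Rightarrow> int) \<Rightarrow> nat set" where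
  "Fset A R = {i \<in> A. R i > 0}"

definition chem_network :: "nat \<Rightarrow> (nat \<Rightarrow> int) set \<Rightarrow> bool" where
  "chem_network N Rs \<longleftrightarrow> finite Rs \<and>
     (\<forall>R\<in>Rs. R \<noteq> (\<lambda>_. 0) \<and> vec_on (species N) R)"

definition bidirectional :: "(nat \<Rightarrow> int) set \<Rightarrow> bool" where
  "bidirectional Rs \<longleftrightarrow> (\<forall>R\<in>Rs. (\<lambda>i. - R i) \<in> Rs)"

definition kinetic_system :: "nat \<Rightarrow> (nat \<Rightarrow> int) set \<Rightarrow> ((nat \<Rightarrow> int) \<Rightarrow> real) \<Rightarrow> bool" where
  "kinetic_system N Rs K \<longleftrightarrow> chem_network N Rs \<and> (\<forall>R\<in>Rs. K R > 0)"

definition is_half :: "(nat \<Rightarrow> int) set \<Rightarrow> (nat \<Rightarrow> int) set \<Rightarrow> bool" where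
  "is_half Rs Rss \<longleftrightarrow> Rss \<subseteq> Rs \<and>
     (\<forall>R\<in>Rs. (R \<in> Rss) \<noteq> ((\<lambda>i. - R i) \<in> Rss))"

definition detailed_balance :: "nat \<Rightarrow> (nat \<Rightarrow> int) set \<Rightarrow> ((nat \<Rightarrow> int) \<Rightarrow> real) \<Rightarrow> bool" where
  "detailed_balance N Rs K \<longleftrightarrow> bidirectional Rs \<and>
     (\<exists>Rss. is_half Rs Rss \<and>
       (\<exists>Nb :: nat \<Rightarrow> real. (\<forall>i\<in>species N. Nb i > 0) \<and>
          (\<forall>R\<in>Rss.
             K R * (\<Prod>i\<in>Iset (species N) R. Nb i ^ nat (- R i))
           = K (\<lambda>i. - R i) * (\<Prod>i\<in>Fset (species N) R. Nb i ^ nat (R i)))))"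

text \<open>Conservation laws M = (span Rs)^perp; conservative iff M meets the positive orthant.\<close>
definition conservative :: "nat \<Rightarrow> (nat \<Rightarrow> int) set \<Rightarrow> bool" where
  "conservative N Rs \<longleftrightarrow>
     (\<exists>m :: nat \<Rightarrow> real. (\<forall>i\<in>species N. m i > 0) \<and>
        (\<forall>R\<in>Rs. (\<Sum>i\<in>species N. m i * of_int (R i)) = 0))"

definition closed_system :: "nat \<Rightarrow> (nat \<Rightarrow> int) set \<Rightarrow> ((nat \<Rightarrow> int) \<Rightarrow> real) \<Rightarrow> bool" where
  "closed_system N Rs K \<longleftrightarrow> detailed_balance N Rs K \<and> conservative N Rs \<and>
     (\<forall>R\<in>Rs. Iset (species N) R \<noteq> {} \<and> Fset (species N) R \<noteq> {})"

definition reduced_rate ::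
  "nat \<Rightarrow> nat \<Rightarrow> (nat \<Rightarrow> int) set \<Rightarrow> ((nat \<Rightarrow> int) \<Rightarrow> real) \<Rightarrow> (nat \<Rightarrow> real)
     \<Rightarrow> (nat \<Rightarrow> int) \<Rightarrow> real" where
  "reduced_rate N Nc Rc Kc n R =
     (\<Sum>Rb\<in>{Rb \<in> Rc. proj (species N) Rb = R}.
        Kc Rb * (\<Prod>s\<in>(species Nc - species N) \<inter> Iset (species Nc) Rb. n s ^ nat (- Rb s)))"

definition completion ::
  "nat \<Rightarrow> (nat \<Rightarrow> int) set \<Rightarrow> ((nat \<Rightarrow> int) \<Rightarrow> real) \<Rightarrow>
   nat \<Rightarrow> (nat \<Rightarrow> int) set \<Rightarrow> ((nat \<Rightarrow> int) \<Rightarrow> real) \<Rightarrow> bool" where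
  "completion N Rs K Nc Rc Kc \<longleftrightarrow>
     kinetic_system Nc Rc Kc \<and> species N \<subseteq> species Nc \<and>
     Rs = proj (species N) ` Rc \<and>
     (\<exists>n :: nat \<Rightarrow> real. (\<forall>i\<in>species Nc - species N. n i > 0) \<and>
        (\<forall>R\<in>Rs. K R = reduced_rate N Nc Rc Kc n R))"

end

theory Submission
  imports Defs "HOL-Library.Function_Algebras"
begin

text \<open>Give every reaction R its own fresh species a R and replace R by
  R + e(a R) - e(a (-R)), so that a R is a product and a (-R) a reactant of R.
  The projection back to the original species is still R, each reaction has exactly one
  lift, and the lifted rates K R reduce to the original ones.  Setting the equilibrium
  concentration of a R to K R (and 1 on the original species) balances R against -R,
  because both sides become K R * K (-R).  Giving the fresh species suitable positive
  masses compensates the net change of mass of every reaction, which makes the lifted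
  system conservative.\<close>

lemma finite_species: "finite (species n)"
  by (simp add: species_def)

lemma bidirectional_iff: "bidirectional Rs \<longleftrightarrow> (\<forall>R\<in>Rs. - R \<in> Rs)"
  by (simp add: bidirectional_def fun_Compl_def)

lemma is_half_iff: "is_half Rs Rss \<longleftrightarrow> Rss \<subseteq> Rs \<and> (\<forall>R\<in>Rs. (R \<in> Rss) \<noteq> (- R \<in> Rss))"
  by (simp add: is_half_def fun_Compl_def)

lemma is_half_exists:
  assumes "bidirectional Rs" and "(\<lambda>_. 0) \<notin> Rs"
  shows "\<exists>Rss. is_half Rs Rss"
proof -
  define lead :: "(nat \<Rightarrow> int) \<Rightarrow> int" where "lead R = R (LEAST i. R i \<noteq> 0)" for R
  have "(lead R > 0) \<noteq> (lead (- R) > 0)" if "R \<in> Rs" for R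
  proof -
    from that assms(2) have "R \<noteq> (\<lambda>_. 0)" by blast
    then obtain i where "R i \<noteq> 0" by (auto simp: fun_eq_iff)
    then have "lead R \<noteq> 0" unfolding lead_def by (rule LeastI)
    moreover have "lead (- R) = - lead R" by (simp add: lead_def)
    ultimately show ?thesis by linarith
  qed
  moreover have "- R \<in> Rs" if "R \<in> Rs" for R
    using assms(1) that by (simp add: bidirectional_iff)
  ultimately have "is_half Rs {R \<in> Rs. lead R > 0}"
    unfolding is_half_iff by blast
  then show ?thesis ..
qed

lemma detailed_balanceI:
  assumes "bidirectional Rs" and "(\<lambda>_. 0) \<notin> Rs" and "\<forall>i\<in>species N. Nb i > 0"
    and "\<And>R. R \<in> Rs \<Longrightarrow> K R * (\<Prod>i\<in>Iset (species N) R. Nb i ^ nat (- R i))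
                        = K (- R) * (\<Prod>i\<in>Fset (species N) R. Nb i ^ nat (R i))"
  shows "detailed_balance N Rs K"
proof -
  obtain Rss where half: "is_half Rs Rss" using is_half_exists assms(1,2) by blast
  show ?thesis
    unfolding detailed_balance_def
  proof (intro conjI exI[of _ Rss] exI[of _ Nb] ballI)
    fix R assume "R \<in> Rss"
    with half have "R \<in> Rs" by (auto simp: is_half_iff)
    then show "K R * (\<Prod>i\<in>Iset (species N) R. Nb i ^ nat (- R i))
             = K (\<lambda>i. - R i) * (\<Prod>i\<in>Fset (species N) R. Nb i ^ nat (R i))"
      using assms(4) by (simp add: fun_Compl_def)
  qed (use assms(1,3) half in auto)
qed

definition lift_reaction :: "((nat \<Rightarrow> int) \<Rightarrow> nat) \<Rightarrow> (nat \<Rightarrow> int) \<Rightarrow> nat \<Rightarrow> int" where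
  "lift_reaction a R = (\<lambda>i. R i + of_bool (i = a R) - of_bool (i = a (- R)))"

lemma lift_reaction_uminus: "lift_reaction a (- R) = - lift_reaction a R"
  by (auto simp: lift_reaction_def fun_eq_iff)

locale labelled_network =
  fixes N Nc :: nat and Rs :: "(nat \<Rightarrow> int) set" and K :: "(nat \<Rightarrow> int) \<Rightarrow> real"
    and a :: "(nat \<Rightarrow> int) \<Rightarrow> nat"
  assumes kinetic: "kinetic_system N Rs K" and bidirectional: "bidirectional Rs"
    and label_inj: "inj_on a Rs" and label_range: "a ` Rs \<subseteq> {N<..Nc}"
    and N_le_Nc: "N \<le> Nc"
begin

abbreviation lift :: "(nat \<Rightarrow> int) \<Rightarrow> nat \<Rightarrow> int" where
  "lift \<equiv> lift_reaction a"

definition lifted_rate :: "(nat \<Rightarrow> int) \<Rightarrow> real" where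
  "lifted_rate Rb = K (proj (species N) Rb)"

definition label_weight :: "((nat \<Rightarrow> int) \<Rightarrow> real) \<Rightarrow> nat \<Rightarrow> real" where
  "label_weight f i = (if i \<in> a ` Rs then f (inv_into Rs a i) else 1)"

lemma finite_reactions: "finite Rs"
  and reaction_nonzero: "(\<lambda>_. 0) \<notin> Rs"
  and rate_pos: "R \<in> Rs \<Longrightarrow> K R > 0"
  and reaction_vanishes: "R \<in> Rs \<Longrightarrow> i \<notin> species N \<Longrightarrow> R i = 0"
  using kinetic by (auto simp: kinetic_system_def chem_network_def vec_on_def)

lemma uminus_reaction: "R \<in> Rs \<Longrightarrow> - R \<in> Rs"
  using bidirectional by (simp add: bidirectional_iff)

lemma label_uminus_neq:
  assumes "R \<in> Rs" shows "a (- R) \<noteq> a R"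
proof
  assume "a (- R) = a R"
  then have "- R = R" using label_inj assms uminus_reaction by (meson inj_onD)
  then have "R i = 0" for i using fun_cong[of "- R" R i] by simp
  then have "R = (\<lambda>_. 0)" by blast
  then show False using assms reaction_nonzero by simp
qed

lemma label_in_species: "R \<in> Rs \<Longrightarrow> a R \<in> species Nc"
  and label_notin_species: "R \<in> Rs \<Longrightarrow> a R \<notin> species N"
  using label_range by (auto simp: species_def)

lemma species_subset: "species N \<subseteq> species Nc"
  using N_le_Nc by (auto simp: species_def)

lemma lift_on_species: "R \<in> Rs \<Longrightarrow> i \<in> species N \<Longrightarrow> lift R i = R i"
  using label_notin_species uminus_reaction by (auto simp: lift_reaction_def)

lemma lift_off_species:
  "R \<in> Rs \<Longrightarrow> i \<notin> species N \<Longrightarrow> lift R i = of_bool (i = a R) - of_bool (i = a (- R))"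
  using reaction_vanishes by (simp add: lift_reaction_def)

lemma lift_at_label:
  assumes "R \<in> Rs" shows "lift R (a R) = 1"
  using lift_off_species[OF assms label_notin_species[OF assms]] label_uminus_neq[OF assms]
  by simp

lemma lift_at_uminus_label:
  assumes "R \<in> Rs" shows "lift R (a (- R)) = -1"
  using lift_off_species[OF assms label_notin_species[OF uminus_reaction[OF assms]]]
    label_uminus_neq[OF assms]
  by simp

lemma proj_lift: "R \<in> Rs \<Longrightarrow> proj (species N) (lift R) = R"
  using lift_on_species reaction_vanishes by (auto simp: proj_def)

lemma lift_vec_on: "R \<in> Rs \<Longrightarrow> vec_on (species Nc) (lift R)"
  using reaction_vanishes species_subset label_in_species uminus_reaction
  by (auto simp: vec_on_def lift_reaction_def)

lemma Iset_lift:
  assumes "R \<in> Rs"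
  shows "Iset (species Nc) (lift R) = insert (a (- R)) (Iset (species N) R)"
proof (rule set_eqI)
  fix i
  show "i \<in> Iset (species Nc) (lift R) \<longleftrightarrow> i \<in> insert (a (- R)) (Iset (species N) R)"
  proof (cases "i \<in> species N")
    case True
    then show ?thesis
      using species_subset lift_on_species[OF assms True]
        label_notin_species[OF uminus_reaction[OF assms]]
      by (auto simp: Iset_def)
  next
    case False
    then show ?thesis
      using lift_off_species[OF assms False] label_in_species[OF uminus_reaction[OF assms]]
        label_uminus_neq[OF assms]
      by (auto simp: Iset_def)
  qed
qed

lemma Fset_lift:
  assumes "R \<in> Rs"
  shows "Fset (species Nc) (lift R) = insert (a R) (Fset (species N) R)"
proof (rule set_eqI)
  fix i
  show "i \<in> Fset (species Nc) (lift R) \<longleftrightarrow> i \<in> insert (a R) (Fset (species N) R)"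
  proof (cases "i \<in> species N")
    case True
    then show ?thesis
      using species_subset lift_on_species[OF assms True] label_notin_species[OF assms]
      by (auto simp: Fset_def)
  next
    case False
    then show ?thesis
      using lift_off_species[OF assms False] label_in_species[OF assms] label_uminus_neq[OF assms]
      by (auto simp: Fset_def)
  qed
qed

lemma lift_nonzero: "R \<in> Rs \<Longrightarrow> lift R \<noteq> (\<lambda>_. 0)"
  using lift_at_label by (metis zero_neq_one)

lemma lift_fiber: "R \<in> Rs \<Longrightarrow> {Rb \<in> lift ` Rs. proj (species N) Rb = R} = {lift R}"
  using proj_lift by auto

lemma unique_lift:
  assumes "R \<in> Rs" shows "\<exists>!Rb. Rb \<in> lift ` Rs \<and> proj (species N) Rb = R"
proof (rule ex1I[of _ "lift R"])
  show "lift R \<in> lift ` Rs \<and> proj (species N) (lift R) = R"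
    using assms proj_lift by blast
  show "Rb = lift R" if "Rb \<in> lift ` Rs \<and> proj (species N) Rb = R" for Rb
    using that lift_fiber[OF assms] by blast
qed

lemma proj_lifted_nonzero:
  assumes "Rb \<in> lift ` Rs" shows "proj (species N) Rb \<noteq> (\<lambda>_. 0)"
proof -
  obtain R where "R \<in> Rs" and "Rb = lift R" using assms by blast
  then have "proj (species N) Rb \<in> Rs" by (simp add: proj_lift)
  with reaction_nonzero show ?thesis by metis
qed

lemma lifted_rate_lift: "R \<in> Rs \<Longrightarrow> lifted_rate (lift R) = K R"
  by (simp add: lifted_rate_def proj_lift)

lemma kinetic_lifted: "kinetic_system Nc (lift ` Rs) lifted_rate"
  using finite_reactions lift_nonzero lift_vec_on lifted_rate_lift rate_pos
  by (auto simp: kinetic_system_def chem_network_def)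

lemma completion_lifted: "completion N Rs K Nc (lift ` Rs) lifted_rate"
proof -
  have "reduced_rate N Nc (lift ` Rs) lifted_rate (\<lambda>_. 1) R = K R" if "R \<in> Rs" for R
    using that by (simp add: reduced_rate_def lift_fiber lifted_rate_lift)
  moreover have "Rs = proj (species N) ` lift ` Rs"
    by (simp add: image_image proj_lift)
  ultimately show ?thesis
    unfolding completion_def using kinetic_lifted species_subset
    by (intro conjI exI[of _ "\<lambda>_. 1"]) auto
qed

lemma bidirectional_lifted: "bidirectional (lift ` Rs)"
  unfolding bidirectional_iff using uminus_reaction
  by (auto simp flip: lift_reaction_uminus)

lemma label_weight_at_label: "R \<in> Rs \<Longrightarrow> label_weight f (a R) = f R"
  using label_inj by (simp add: label_weight_def)

lemma label_weight_on_species: "i \<in> species N \<Longrightarrow> label_weight f i = 1"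
  using label_notin_species by (auto simp: label_weight_def)

lemma label_weight_pos: "(\<And>R. R \<in> Rs \<Longrightarrow> f R > 0) \<Longrightarrow> label_weight f i > 0"
  by (simp add: label_weight_def inv_into_into)

lemma prod_label_weight_insert_label:
  assumes "R \<in> Rs" and "A \<subseteq> species N"
  shows "(\<Prod>i\<in>insert (a R) A. label_weight f i ^ e i) = f R ^ e (a R)"
proof -
  have "finite A" using assms(2) finite_subset finite_species by blast
  moreover have "a R \<notin> A" using assms label_notin_species by blast
  moreover have "\<forall>i\<in>A. label_weight f i ^ e i = 1"
    using assms(2) label_weight_on_species by auto
  then have "(\<Prod>i\<in>A. label_weight f i ^ e i) = 1" by (rule prod.neutral)
  ultimately show ?thesis using label_weight_at_label[OF assms(1)] by simp
qed

lemma detailed_balance_lifted: "detailed_balance Nc (lift ` Rs) lifted_rate"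
proof (rule detailed_balanceI)
  show "bidirectional (lift ` Rs)" by (rule bidirectional_lifted)
  show "(\<lambda>_. 0) \<notin> lift ` Rs" using lift_nonzero by force
  show "\<forall>i\<in>species Nc. label_weight K i > 0" using rate_pos label_weight_pos by blast
  fix Rb assume "Rb \<in> lift ` Rs"
  then obtain R where R: "R \<in> Rs" and Rb: "Rb = lift R" by blast
  have "(\<Prod>i\<in>Iset (species Nc) Rb. label_weight K i ^ nat (- Rb i))
      = (\<Prod>i\<in>insert (a (- R)) (Iset (species N) R). label_weight K i ^ nat (- lift R i))"
    by (simp add: Rb Iset_lift[OF R])
  also have "\<dots> = K (- R) ^ nat (- lift R (a (- R)))"
    by (rule prod_label_weight_insert_label[OF uminus_reaction[OF R]]) (auto simp: Iset_def)
  also have "\<dots> = K (- R)" by (simp add: lift_at_uminus_label[OF R])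
  finally have reactant_side:
    "(\<Prod>i\<in>Iset (species Nc) Rb. label_weight K i ^ nat (- Rb i)) = K (- R)" .
  have "(\<Prod>i\<in>Fset (species Nc) Rb. label_weight K i ^ nat (Rb i))
      = (\<Prod>i\<in>insert (a R) (Fset (species N) R). label_weight K i ^ nat (lift R i))"
    by (simp add: Rb Fset_lift[OF R])
  also have "\<dots> = K R ^ nat (lift R (a R))"
    by (rule prod_label_weight_insert_label[OF R]) (auto simp: Fset_def)
  also have "\<dots> = K R" by (simp add: lift_at_label[OF R])
  finally have product_side:
    "(\<Prod>i\<in>Fset (species Nc) Rb. label_weight K i ^ nat (Rb i)) = K R" .
  have "lifted_rate (- Rb) = K (- R)"
    using lifted_rate_lift[OF uminus_reaction[OF R]] by (simp add: Rb lift_reaction_uminus)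
  with reactant_side product_side lifted_rate_lift[OF R]
  show "lifted_rate Rb * (\<Prod>i\<in>Iset (species Nc) Rb. label_weight K i ^ nat (- Rb i))
      = lifted_rate (- Rb) * (\<Prod>i\<in>Fset (species Nc) Rb. label_weight K i ^ nat (Rb i))"
    by (simp add: Rb)
qed

definition total_change :: "(nat \<Rightarrow> int) \<Rightarrow> real" where
  "total_change R = (\<Sum>i\<in>species N. of_int (R i))"

lemma total_change_uminus: "total_change (- R) = - total_change R"
  by (simp add: total_change_def sum_negf)

lemma weighted_change_lift:
  assumes "R \<in> Rs"
  shows "(\<Sum>i\<in>species Nc. label_weight f i * of_int (lift R i)) = total_change R + f R - f (- R)"
proof -
  let ?w = "label_weight f"
  have "(\<Sum>i\<in>species Nc. ?w i * of_int (R i)) = (\<Sum>i\<in>species N. ?w i * of_int (R i))"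
    using species_subset reaction_vanishes[OF assms]
    by (intro sum.mono_neutral_right) (auto simp: species_def)
  also have "\<dots> = total_change R"
    by (simp add: total_change_def label_weight_on_species)
  finally have "(\<Sum>i\<in>species Nc. ?w i * of_int (R i)) = total_change R" .
  moreover have "(\<Sum>i\<in>species Nc. ?w i * of_bool (i = a S)) = f S" if "S \<in> Rs" for S
    using label_in_species[OF that] label_weight_at_label[OF that]
    by (simp add: of_bool_def if_distrib[of "(*) _"] finite_species cong: if_cong)
  moreover have "(\<Sum>i\<in>species Nc. ?w i * of_int (lift R i))
      = (\<Sum>i\<in>species Nc. ?w i * of_int (R i)) + (\<Sum>i\<in>species Nc. ?w i * of_bool (i = a R))
        - (\<Sum>i\<in>species Nc. ?w i * of_bool (i = a (- R)))"
    by (simp add: lift_reaction_def sum.distrib sum_subtractf distrib_left right_diff_distrib)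
  ultimately show ?thesis
    using assms uminus_reaction by simp
qed

lemma conservative_lifted: "conservative Nc (lift ` Rs)"
proof -
  \<comment> \<open>mass (a R) - mass (a (-R)) = max 0 (- t) - max 0 t = - t cancels the net change t of R\<close>
  define mass where "mass = label_weight (\<lambda>R. 1 + max 0 (- total_change R))"
  have "(\<Sum>i\<in>species Nc. mass i * of_int (lift R i)) = 0" if "R \<in> Rs" for R
    using weighted_change_lift[OF that] by (simp add: mass_def total_change_uminus)
  moreover have "mass i > 0" for i
    unfolding mass_def by (rule label_weight_pos) simp
  ultimately show ?thesis
    unfolding conservative_def by (intro exI[of _ mass]) auto
qed

lemma closed_system_lifted: "closed_system Nc (lift ` Rs) lifted_rate"
  using detailed_balance_lifted conservative_lifted Iset_lift Fset_lift
  by (auto simp: closed_system_def)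

end

theorem theorem6p3:
  fixes N :: nat and Rs :: "(nat \<Rightarrow> int) set" and K :: "(nat \<Rightarrow> int) \<Rightarrow> real"
  assumes "kinetic_system N Rs K" and "bidirectional Rs"
  shows "\<exists>Nc Rc Kc. completion N Rs K Nc Rc Kc \<and> closed_system Nc Rc Kc \<and>
           (\<forall>Rb\<in>Rc. proj (species N) Rb \<noteq> (\<lambda>_. 0)) \<and>
           (\<forall>R\<in>Rs. \<exists>!Rb. Rb \<in> Rc \<and> proj (species N) Rb = R)"
proof -
  have "finite Rs" using assms(1) by (simp add: kinetic_system_def chem_network_def)
  then obtain h :: "(nat \<Rightarrow> int) \<Rightarrow> nat" and m where h: "h ` Rs = {i. i < m}" "inj_on h Rs"
    by (blast dest: finite_imp_inj_to_nat_seg)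
  interpret labelled_network N "N + m" Rs K "\<lambda>R. N + 1 + h R"
  proof unfold_locales
    show "kinetic_system N Rs K" "bidirectional Rs" "N \<le> N + m"
      using assms by simp_all
    show "inj_on (\<lambda>R. N + 1 + h R) Rs"
      using h(2) by (simp add: inj_on_def)
    show "(\<lambda>R. N + 1 + h R) ` Rs \<subseteq> {N<..N + m}"
    proof (rule image_subsetI)
      fix R assume "R \<in> Rs"
      then have "h R \<in> {i. i < m}" unfolding h(1)[symmetric] by (rule imageI)
      then show "N + 1 + h R \<in> {N<..N + m}" by simp
    qed
  qed
  show ?thesis
    using completion_lifted closed_system_lifted proj_lifted_nonzero unique_lift
    by (intro exI conjI ballI)
qed

end
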